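(* For every integer $m\ge2$, \[ \int\cdots\int_{V_m}\frac{dx_1\cdots dx_m}{x_1\cdots x_m}=(m-1)!\,\zeta(m). \]
   Context: $V_m:=\{(x_1,\dots,x_m)\in[0,1]^m : x_1+x_j\ge1 \text{ for } j=2,\dots,m\}$; $\zeta$ is the Riemann zeta function. *)

theory Defs
  imports "HOL-Analysis.Analysis"
begin

definition zeta :: "nat \<Rightarrow> real" where
  "zeta s = (\<Sum>n. 1 / real (Suc n) ^ s)"

text \<open>V_m as a subset of [0,1]^m, points indexed by {1..m} (extensional functions).\<close>
definition V :: "nat \<Rightarrow> (nat \<Rightarrow> real) set" where
  "V m = {x \<in> {1..m} \<rightarrow>\<^sub>E {0..1}. \<forall>j\<in>{2..m}. x 1 + x j \<ge> 1}"

end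

theory Submission
  imports Defs
begin

(*
  For fixed x_1 = t the constraints on x_2,...,x_m decouple, so by Tonelli the
  integral equals  \<integral>_0^1 (1/t) (\<integral>_{1-t}^1 dy/y)^(m-1) dt
                 = \<integral>_0^1 (-ln(1-t))^(m-1) / t dt.
  The reflection t \<mapsto> 1-t turns this into \<integral>_0^1 (-ln u)^n / (1-u) du with
  n = m-1; expanding 1/(1-u) as a geometric series and integrating termwise
  with \<integral>_0^1 u^k (-ln u)^n du = n!/(k+1)^(n+1) gives n! \<zeta>(n+1).
*)

section \<open>One-dimensional integrals\<close>

lemma power_times_neg_ln_power_tendsto_0:
  fixes c j :: nat
  assumes "c \<ge> 1"
  shows "((\<lambda>u::real. u^c * (-ln u)^j) \<longlongrightarrow> 0) (at_right 0)"
proof -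
  have neg_ln: "filterlim (\<lambda>u::real. -ln u) at_top (at_right 0)"
    using ln_at_0 by (simp add: filterlim_uminus_at_bot)
  have "((\<lambda>s. s^j / exp s) \<longlongrightarrow> (0::real)) at_top"
    by (rule tendsto_power_div_exp_0)
  from filterlim_compose[OF this neg_ln]
  have subst: "((\<lambda>u. (-ln u)^j / exp (-ln u)) \<longlongrightarrow> (0::real)) (at_right 0)" .
  have unit: "\<forall>\<^sub>F u in at_right (0::real). 0 < u \<and> u < 1"
    unfolding eventually_at_right_field by (auto intro: exI[of _ 1])
  have linear: "((\<lambda>u::real. u * (-ln u)^j) \<longlongrightarrow> 0) (at_right 0)"
    by (rule Lim_transform_eventually[OF subst], rule eventually_mono[OF unit])
       (simp add: exp_minus field_simps)
  show ?thesis
  proof (rule tendsto_sandwich[OF _ _ tendsto_const linear])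
    from unit show "\<forall>\<^sub>F u in at_right (0::real). 0 \<le> u^c * (-ln u)^j"
      by eventually_elim simp
    from unit show "\<forall>\<^sub>F u in at_right (0::real). u^c * (-ln u)^j \<le> u * (-ln u)^j"
    proof eventually_elim
      case (elim u)
      have "u^c \<le> u^1" using elim assms by (intro power_decreasing) auto
      then show ?case using elim by (intro mult_right_mono) auto
    qed
  qed
qed

text \<open>An antiderivative of u^k (-ln u)^n on (0,\<infinity>), obtained by repeated
  integration by parts.\<close>
fun log_power_antideriv :: "nat \<Rightarrow> nat \<Rightarrow> real \<Rightarrow> real" where
  "log_power_antideriv k 0 u = u^(k+1) / real (k+1)"
| "log_power_antideriv k (Suc n) u =
     u^(k+1) * (-ln u)^(Suc n) / real (k+1) + real (Suc n) / real (k+1) * log_power_antideriv k n u"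

lemma log_power_antideriv_deriv:
  assumes "u > 0"
  shows "(log_power_antideriv k n has_real_derivative u^k * (-ln u)^n) (at u)"
proof (induction n)
  case 0
  show ?case
    using DERIV_cdivide[OF DERIV_pow[of "k+1" u], of "real (k+1)"]
    by (simp add: fun_eq_iff del: of_nat_add)
next
  case (Suc n)
  have d_log: "((\<lambda>u. (-ln u)^(Suc n)) has_real_derivative real (Suc n) * (-ln u)^n * (-(1/u))) (at u)"
  proof -
    have "((\<lambda>u. -ln u) has_real_derivative -(1/u)) (at u)"
      using assms by (auto intro!: derivative_eq_intros simp: field_simps)
    from DERIV_power[OF this, of "Suc n"] show ?thesis by simp
  qed
  have d_head: "((\<lambda>u. u^(k+1) * (-ln u)^(Suc n) / real (k+1)) has_real_derivative
      u^k * (-ln u)^(Suc n) - real (Suc n) / real (k+1) * (u^k * (-ln u)^n)) (at u)"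
  proof -
    have "(real (k+1) * u^k * (-ln u)^(Suc n) + real (Suc n) * (-ln u)^n * (-(1/u)) * u^(k+1)) / real (k+1)
        = u^k * (-ln u)^(Suc n) - real (Suc n) / real (k+1) * (u^k * (-ln u)^n)"
      using assms by (simp del: of_nat_Suc of_nat_add add: field_simps power_Suc)
    with DERIV_cdivide[OF DERIV_mult[OF DERIV_pow[of "k+1" u] d_log], of "real (k+1)"]
    show ?thesis by simp
  qed
  from DERIV_add[OF d_head DERIV_cmult[OF Suc.IH, of "real (Suc n) / real (k+1)"]]
  show ?case by (simp add: fun_eq_iff algebra_simps)
qed

lemma log_power_antideriv_tendsto_0: "(log_power_antideriv k n \<longlongrightarrow> 0) (at_right 0)"
proof (induction n)
  case 0
  have "((\<lambda>u::real. u^(k+1) * (-ln u)^0 / real (k+1)) \<longlongrightarrow> 0 / real (k+1)) (at_right 0)"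
    by (intro tendsto_divide power_times_neg_ln_power_tendsto_0) auto
  then show ?case by simp
next
  case (Suc n)
  have "((\<lambda>u::real. u^(k+1) * (-ln u)^Suc n / real (k+1) + real (Suc n) / real (k+1) * log_power_antideriv k n u)
        \<longlongrightarrow> 0 / real (k+1) + real (Suc n) / real (k+1) * 0) (at_right 0)"
    by (intro tendsto_add tendsto_divide tendsto_mult Suc.IH tendsto_const
        power_times_neg_ln_power_tendsto_0) auto
  then show ?case by simp
qed

lemma log_power_antideriv_at_1: "log_power_antideriv k n 1 = fact n / real (k+1)^(n+1)"
  by (induction n) (auto simp: field_simps)

lemma nn_integral_power_neg_ln_power:
  "(\<integral>\<^sup>+u. ennreal (u^k * (-ln u)^n) * indicator {0<..<1} u \<partial>lborel)
     = ennreal (fact n / real (k+1)^(n+1))"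
proof -
  let ?f = "\<lambda>u::real. u^k * (-ln u)^n" and ?F = "log_power_antideriv k n"
  have at_0: "((?F \<circ> real_of_ereal) \<longlongrightarrow> 0) (at_right (ereal 0))"
    using log_power_antideriv_tendsto_0[of k n] by (simp add: ereal_tendsto_simps)
  have "isCont ?F 1" by (rule DERIV_isCont[OF log_power_antideriv_deriv]) simp
  then have at_1: "((?F \<circ> real_of_ereal) \<longlongrightarrow> ?F 1) (at_left (ereal 1))"
    by (simp add: isCont_def filterlim_at_split ereal_tendsto_simps)
  have deriv: "\<And>x. ereal 0 < ereal x \<Longrightarrow> ereal x < ereal 1 \<Longrightarrow> DERIV ?F x :> ?f x"
    by (rule log_power_antideriv_deriv) simp
  have cont: "\<And>x. ereal 0 < ereal x \<Longrightarrow> ereal x < ereal 1 \<Longrightarrow> isCont ?f x"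
    by (auto intro!: continuous_intros)
  have nonneg: "AE x in lborel. ereal 0 < ereal x \<longrightarrow> ereal x < ereal 1 \<longrightarrow> 0 \<le> ?f x"
    by (auto intro!: AE_I2)
  note FTC = interval_integral_FTC_nonneg[OF _ deriv cont nonneg at_0 at_1]
  have int: "integrable lborel (\<lambda>x. indicator {0<..<1} x * ?f x)"
    using FTC(1) by (simp add: set_integrable_def)
  have val: "(\<integral>x. indicator {0<..<1} x * ?f x \<partial>lborel) = ?F 1"
    using FTC(2) by (simp add: interval_lebesgue_integral_def set_lebesgue_integral_def)
  have "(\<integral>\<^sup>+u. ennreal (?f u) * indicator {0<..<1} u \<partial>lborel)
      = (\<integral>\<^sup>+u. ennreal (indicator {0<..<1} u * ?f u) \<partial>lborel)"
    by (intro nn_integral_cong) (auto simp: indicator_def)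
  also have "\<dots> = ennreal (\<integral>x. indicator {0<..<1} x * ?f x \<partial>lborel)"
    by (intro nn_integral_eq_integral int AE_I2) (auto simp: indicator_def)
  finally show ?thesis using val log_power_antideriv_at_1 by simp
qed

lemma zeta_summable:
  assumes "s \<ge> 2"
  shows "summable (\<lambda>k. 1 / real (Suc k) ^ s)"
proof -
  have "summable (\<lambda>k. inverse (real k ^ s))"
    using inverse_power_summable[OF assms, where 'a = real] .
  then have "summable (\<lambda>k. inverse (real (Suc k) ^ s))" by (subst summable_Suc_iff)
  then show ?thesis by (simp add: field_simps)
qed

text \<open>Expanding 1/(1-u) geometrically: \<integral>_0^1 (-ln u)^n / (1-u) du = n! \<zeta>(n+1).\<close>
lemma nn_integral_neg_ln_power_div_one_minus:
  assumes "n \<ge> 1"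
  shows "(\<integral>\<^sup>+u. ennreal ((-ln u)^n / (1-u)) * indicator {0<..<1} u \<partial>lborel)
           = ennreal (fact n * zeta (n+1))"
proof -
  have geometric: "ennreal ((-ln u)^n / (1-u)) * indicator {0<..<1} u
      = (\<Sum>k. ennreal (u^k * (-ln u)^n) * indicator {0<..<1} u)" for u :: real
  proof (cases "u \<in> {0<..<1}")
    case True
    then have "(\<lambda>k. u^k * (-ln u)^n) sums (1/(1-u) * (-ln u)^n)"
      by (intro sums_mult2 geometric_sums) auto
    then have "(\<lambda>k. ennreal (u^k * (-ln u)^n)) sums ennreal (1/(1-u) * (-ln u)^n)"
      using True by (subst sums_ennreal) auto
    then show ?thesis using True by (simp add: sums_iff)
  qed simp
  have summable: "summable (\<lambda>k. fact n / real (k+1)^(n+1))"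
    using summable_mult[OF zeta_summable[of "n+1"], of "fact n"] assms by simp
  have "(\<integral>\<^sup>+u. ennreal ((-ln u)^n / (1-u)) * indicator {0<..<1} u \<partial>lborel)
      = (\<Sum>k. \<integral>\<^sup>+u. ennreal (u^k * (-ln u)^n) * indicator {0<..<1} u \<partial>lborel)"
    unfolding geometric by (intro nn_integral_suminf) auto
  also have "\<dots> = ennreal (\<Sum>k. fact n / real (k+1)^(n+1))"
    unfolding nn_integral_power_neg_ln_power using summable by (intro suminf_ennreal2) auto
  also have "(\<Sum>k. fact n / real (k+1)^(n+1)) = fact n * zeta (n+1)"
    using zeta_summable[of "n+1"] assms by (simp add: zeta_def suminf_mult[symmetric])
  finally show ?thesis .
qed

text \<open>The same integral after the reflection t = 1 - u.\<close>
lemma nn_integral_neg_ln_one_minus_power_div: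
  assumes "n \<ge> 1"
  shows "(\<integral>\<^sup>+t. ennreal ((-ln (1-t))^n / t) * indicator {0<..<1} t \<partial>lborel)
           = ennreal (fact n * zeta (n+1))"
proof -
  have "(\<integral>\<^sup>+t. ennreal ((-ln (1-t))^n / t) * indicator {0<..<1} t \<partial>lborel)
     = ennreal \<bar>-1::real\<bar> * (\<integral>\<^sup>+x. ennreal ((-ln (1-(1 + (-1)*x)))^n / (1 + (-1)*x))
                                     * indicator {0<..<1} (1 + (-1)*x) \<partial>lborel)"
    by (rule nn_integral_real_affine[where c = "-1" and t = 1]) auto
  also have "\<dots> = (\<integral>\<^sup>+u. ennreal ((-ln u)^n / (1-u)) * indicator {0<..<1} u \<partial>lborel)"
    by (auto intro!: nn_integral_cong simp: indicator_def)
  finally show ?thesis using nn_integral_neg_ln_power_div_one_minus[OF assms] by simp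
qed

section \<open>Integrands depending on one distinguished coordinate\<close>

text \<open>Tonelli for a "star" integrand c(x_a) \<prod>_{j\<in>I} h(x_a, x_j): once x_a = t is
  fixed, the other coordinates are independent and each contributes \<integral> h(t,y) dy.\<close>
lemma nn_integral_star_product:
  fixes a :: 'i and I :: "'i set"
    and c :: "real \<Rightarrow> ennreal" and h :: "real \<Rightarrow> real \<Rightarrow> ennreal"
  assumes I: "finite I" "a \<notin> I"
    and c_meas[measurable]: "c \<in> borel_measurable borel"
    and h_meas[measurable]: "case_prod h \<in> borel_measurable (borel \<Otimes>\<^sub>M borel)"
  shows "(\<integral>\<^sup>+x. c (x a) * (\<Prod>j\<in>I. h (x a) (x j)) \<partial>(\<Pi>\<^sub>M i\<in>insert a I. lborel))
           = (\<integral>\<^sup>+t. c t * (\<integral>\<^sup>+y. h t y \<partial>lborel) ^ card I \<partial>lborel)"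
proof -
  interpret product_sigma_finite "\<lambda>_. lborel :: real measure" by standard
  have slice_meas[measurable]: "h t \<in> borel_measurable borel" for t
    using measurable_Pair2[OF h_meas, of t] by simp
  have "(\<lambda>x. c (x a) * (\<Prod>j\<in>I. h (x a) (x j))) \<in> borel_measurable (\<Pi>\<^sub>M i\<in>insert a I. lborel)"
    using I by measurable
  then have "(\<integral>\<^sup>+x. c (x a) * (\<Prod>j\<in>I. h (x a) (x j)) \<partial>(\<Pi>\<^sub>M i\<in>insert a I. lborel))
      = (\<integral>\<^sup>+t. (\<integral>\<^sup>+x. c t * (\<Prod>j\<in>I. h t ((x(a := t)) j)) \<partial>(\<Pi>\<^sub>M i\<in>I. lborel)) \<partial>lborel)"
    by (simp add: product_nn_integral_insert_rev[OF I])
  also have "\<dots> = (\<integral>\<^sup>+t. c t * (\<integral>\<^sup>+x. (\<Prod>j\<in>I. h t (x j)) \<partial>(\<Pi>\<^sub>M i\<in>I. lborel)) \<partial>lborel)"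
  proof (intro nn_integral_cong)
    fix t :: real
    have "(\<Prod>j\<in>I. h t ((x(a := t)) j)) = (\<Prod>j\<in>I. h t (x j))" for x :: "'i \<Rightarrow> real"
      using I by (intro prod.cong) auto
    then show "(\<integral>\<^sup>+x. c t * (\<Prod>j\<in>I. h t ((x(a := t)) j)) \<partial>(\<Pi>\<^sub>M i\<in>I. lborel))
        = c t * (\<integral>\<^sup>+x. (\<Prod>j\<in>I. h t (x j)) \<partial>(\<Pi>\<^sub>M i\<in>I. lborel))"
      using I by (simp, intro nn_integral_cmult) measurable
  qed
  also have "\<dots> = (\<integral>\<^sup>+t. c t * (\<integral>\<^sup>+y. h t y \<partial>lborel) ^ card I \<partial>lborel)"
  proof (intro nn_integral_cong)
    fix t :: real
    have "(\<integral>\<^sup>+x. (\<Prod>j\<in>I. h t (x j)) \<partial>(\<Pi>\<^sub>M i\<in>I. lborel)) = (\<Prod>j\<in>I. \<integral>\<^sup>+y. h t y \<partial>lborel)"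
      using I by (intro product_nn_integral_prod) auto
    then show "c t * (\<integral>\<^sup>+x. (\<Prod>j\<in>I. h t (x j)) \<partial>(\<Pi>\<^sub>M i\<in>I. lborel))
        = c t * (\<integral>\<^sup>+y. h t y \<partial>lborel) ^ card I"
      by simp
  qed
  finally show ?thesis .
qed

definition unit_weight :: "real \<Rightarrow> ennreal" where
  "unit_weight t = indicator {0..1} t * ennreal (1/t)"

definition slice_weight :: "real \<Rightarrow> real \<Rightarrow> ennreal" where
  "slice_weight t y = indicator {0..1} y * indicator {1..} (t + y) * ennreal (1/y)"

lemma unit_weight_measurable: "unit_weight \<in> borel_measurable borel"
  unfolding unit_weight_def by measurable

lemma slice_weight_measurable: "case_prod slice_weight \<in> borel_measurable (borel \<Otimes>\<^sub>M borel)"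
  unfolding slice_weight_def case_prod_beta by measurable

text \<open>On points of the product space the integrand over V_m has star form with
  distinguished coordinate 1 (note 1/0 = 0 makes the factorization exact).\<close>
lemma indicator_V_times_inverse_prod:
  assumes "m \<ge> 2" and x: "x \<in> extensional {1..m}"
  shows "indicator (V m) x * ennreal (1 / (\<Prod>i\<in>{1..m}. x i))
           = unit_weight (x 1) * (\<Prod>j\<in>{2..m}. slice_weight (x 1) (x j))"
proof -
  have split: "{1..m} = insert 1 {2..m}" using assms by auto
  show ?thesis
  proof (cases "x \<in> V m")
    case True
    then have unit: "i \<in> {1..m} \<Longrightarrow> x i \<in> {0..1}"
      and star: "j \<in> {2..m} \<Longrightarrow> x 1 + x j \<ge> 1" for i j
      using assms by (auto simp: V_def PiE_iff)
    have "1 / (\<Prod>i\<in>{1..m}. x i) = (\<Prod>i\<in>{1..m}. 1 / x i)"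
      by (simp add: prod_dividef)
    also have "ennreal \<dots> = (\<Prod>i\<in>{1..m}. ennreal (1 / x i))"
      using unit by (intro prod_ennreal[symmetric]) auto
    finally have "ennreal (1 / (\<Prod>i\<in>{1..m}. x i)) = ennreal (1 / x 1) * (\<Prod>j\<in>{2..m}. ennreal (1 / x j))"
      unfolding split by simp
    then show ?thesis
      using True unit star assms
      by (auto simp: unit_weight_def slice_weight_def intro!: prod.cong)
  next
    case False
    then have "x 1 \<notin> {0..1} \<or> (\<exists>j\<in>{2..m}. x j \<notin> {0..1} \<or> x 1 + x j < 1)"
      using x unfolding V_def split by (auto simp: PiE_iff extensional_def not_le)
    then consider "x 1 \<notin> {0..1}" | j where "j \<in> {2..m}" "x j \<notin> {0..1} \<or> x 1 + x j < 1"
      by blast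
    then have "unit_weight (x 1) * (\<Prod>j\<in>{2..m}. slice_weight (x 1) (x j)) = 0"
    proof cases
      case 1
      then show ?thesis by (simp add: unit_weight_def)
    next
      case (2 j)
      then have "slice_weight (x 1) (x j) = 0" by (auto simp: slice_weight_def)
      with 2 have "(\<Prod>j\<in>{2..m}. slice_weight (x 1) (x j)) = 0" by (intro prod_zero) auto
      then show ?thesis by simp
    qed
    then show ?thesis using False by simp
  qed
qed

lemma nn_integral_slice_weight:
  assumes "0 < t" "t < 1"
  shows "(\<integral>\<^sup>+y. slice_weight t y \<partial>lborel) = ennreal (-ln (1-t))"
proof -
  have "(\<integral>\<^sup>+y. slice_weight t y \<partial>lborel) = (\<integral>\<^sup>+y. ennreal (1/y) * indicator {1-t..1} y \<partial>lborel)"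
    using assms by (intro nn_integral_cong) (auto simp: slice_weight_def indicator_def)
  also have "\<dots> = ennreal (ln 1 - ln (1-t))"
    using assms by (intro nn_integral_FTC_Icc) (auto intro!: derivative_eq_intros)
  finally show ?thesis by simp
qed

lemma unit_weight_times_slice_integral:
  "AE t in lborel. unit_weight t * (\<integral>\<^sup>+y. slice_weight t y \<partial>lborel) ^ n
                     = ennreal ((-ln (1-t))^n / t) * indicator {0<..<1} t"
  using AE_lborel_singleton[of "1::real"]
proof eventually_elim
  case (elim t)
  show ?case
  proof (cases "t \<in> {0<..<1}")
    case True
    then show ?thesis
      by (simp add: nn_integral_slice_weight unit_weight_def ennreal_power
          ennreal_mult'[symmetric] divide_inverse mult.commute)
  next
    case False
    then have "t \<notin> {0..1} \<or> t = 0" using elim by auto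
    then show ?thesis using False by (auto simp: unit_weight_def)
  qed
qed

theorem corollary6:
  fixes m :: nat
  assumes "m \<ge> 2"
  shows "(\<integral>\<^sup>+ x. indicator (V m) x * ennreal (1 / (\<Prod>i\<in>{1..m}. x i))
            \<partial>(\<Pi>\<^sub>M i\<in>{1..m}. lborel))
         = ennreal (fact (m - 1) * zeta m)"
proof -
  have split: "{1..m} = insert 1 {2..m}" using assms by auto
  have "(\<integral>\<^sup>+ x. indicator (V m) x * ennreal (1 / (\<Prod>i\<in>{1..m}. x i)) \<partial>(\<Pi>\<^sub>M i\<in>{1..m}. lborel))
      = (\<integral>\<^sup>+ x. unit_weight (x 1) * (\<Prod>j\<in>{2..m}. slice_weight (x 1) (x j))
            \<partial>(\<Pi>\<^sub>M i\<in>insert 1 {2..m}. lborel))"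
    unfolding split[symmetric] using assms
    by (intro nn_integral_cong indicator_V_times_inverse_prod) (auto simp: space_PiM PiE_def)
  also have "\<dots> = (\<integral>\<^sup>+t. unit_weight t * (\<integral>\<^sup>+y. slice_weight t y \<partial>lborel) ^ (m - 1) \<partial>lborel)"
    using nn_integral_star_product[OF _ _ unit_weight_measurable slice_weight_measurable, of "{2..m}" 1]
    by simp
  also have "\<dots> = (\<integral>\<^sup>+t. ennreal ((-ln (1-t))^(m-1) / t) * indicator {0<..<1} t \<partial>lborel)"
    by (intro nn_integral_cong_AE unit_weight_times_slice_integral)
  also have "\<dots> = ennreal (fact (m - 1) * zeta m)"
    using assms nn_integral_neg_ln_one_minus_power_div[of "m - 1"] by simp
  finally show ?thesis .
qed

end
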